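(* Let $u,w\in(-1,1)$, let $B(z)=\left(\frac{z-w}{1-wz}\right)\left(\frac{z-u}{1-uz}\right)$, let $c$ be the unique critical point of $B$ in the open unit disk $\mathbb{D}$, and let \[ \lambda=\exp\!\left[i\left(\pi+2\arg(1-\overline{c}w)+2\arg(1-\overline{c}u)+2\arg(1-c\overline{B(c)})\right)\right]\left(\frac{B(c)-c}{1-\overline{c}B(c)}\right). \] Then $\lambda$ is real.
   Context: The quantities $\exp(2i\arg(\cdot))$ do not depend on the choice of branch of $\arg$. *)

theory Defs
  imports "HOL-Analysis.Analysis"
begin

definition blaschke2 :: "real \<Rightarrow> real \<Rightarrow> complex \<Rightarrow> complex" where
  "blaschke2 w u z =
     ((z - of_real w) / (1 - of_real w * z)) * ((z - of_real u) / (1 - of_real u * z))"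

end

theory Submission
  imports Defs
begin

text \<open>Clearing denominators, the derivative of the Blaschke product vanishes exactly where
  \<open>s c\<^sup>2 - 2 p c + s = 0\<close> with \<open>s = u + w\<close> and \<open>p = 1 + u w\<close>. Since \<open>\<bar>s\<bar> < p\<close>, the imaginary
  part of this equation, \<open>Im c (2 s Re c - 2 p) = 0\<close>, forces \<open>c\<close> to be real inside the disc.
  Then \<open>B(c)\<close> and the three numbers whose arguments are taken are real, so each
  \<open>exp (2 i Arg _)\<close> is 1, the prefactor is \<open>exp (i \<pi>) = -1\<close>, and \<open>\<lambda>\<close> is real.\<close>

lemma exp_two_Arg_of_real:
  assumes "z \<in> \<real>"
  shows "exp (\<i> * (2 * of_real (Arg z))) = 1"
proof -
  have "Arg z = 0 \<or> Arg z = pi" using Arg_real[OF assms] by auto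
  then show ?thesis
  proof
    assume "Arg z = pi"
    then have "\<i> * (2 * of_real (Arg z)) = 2 * of_real pi * \<i>" by simp
    then show ?thesis using exp_two_pi_i by presburger
  qed simp
qed

lemma one_minus_mult_nonzero_in_disc:
  fixes a c :: complex
  assumes "norm a < 1" "norm c < 1"
  shows "1 - a * c \<noteq> 0"
proof
  assume "1 - a * c = 0"
  then have "norm (a * c) = 1" by simp
  moreover have "norm (a * c) < 1"
    using assms mult_strict_mono'[of "norm a" 1 "norm c" 1] by (simp add: norm_mult)
  ultimately show False by simp
qed

lemma has_field_derivative_disc_automorphism:
  fixes a c :: complex
  assumes "1 - a * c \<noteq> 0"
  shows "((\<lambda>z. (z - a) / (1 - a * z)) has_field_derivative (1 - a\<^sup>2) / (1 - a * c)\<^sup>2) (at c)"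
proof -
  have "((\<lambda>z. (z - a) / (1 - a * z)) has_field_derivative
      ((1 - 0) * (1 - a * c) - (c - a) * (0 - a * 1)) / ((1 - a * c) * (1 - a * c))) (at c)"
    by (rule DERIV_divide DERIV_diff DERIV_ident DERIV_const DERIV_cmult assms)+
  moreover have "((1 - 0) * (1 - a * c) - (c - a) * (0 - a * 1)) / ((1 - a * c) * (1 - a * c))
      = (1 - a\<^sup>2) / (1 - a * c)\<^sup>2"
    by (simp add: algebra_simps power2_eq_square)
  ultimately show ?thesis by simp
qed

lemma deriv_blaschke2:
  fixes u w :: real and c :: complex
  defines "a \<equiv> 1 - of_real w * c" and "b \<equiv> 1 - of_real u * c"
  assumes a: "a \<noteq> 0" and b: "b \<noteq> 0"
  shows "deriv (blaschke2 w u) c =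
    ((1 - of_real w ^ 2) * (c - of_real u) * b + (1 - of_real u ^ 2) * (c - of_real w) * a)
    / (a\<^sup>2 * b\<^sup>2)"
proof (rule DERIV_imp_deriv)
  have "(blaschke2 w u has_field_derivative
      (1 - of_real w ^ 2) / a\<^sup>2 * ((c - of_real u) / b)
      + (1 - of_real u ^ 2) / b\<^sup>2 * ((c - of_real w) / a)) (at c)"
    unfolding blaschke2_def[abs_def] a_def b_def
    by (intro DERIV_mult has_field_derivative_disc_automorphism a[unfolded a_def] b[unfolded b_def])
  then show "(blaschke2 w u has_field_derivative
      ((1 - of_real w ^ 2) * (c - of_real u) * b + (1 - of_real u ^ 2) * (c - of_real w) * a)
      / (a\<^sup>2 * b\<^sup>2)) (at c)"
  proof (rule back_subst[of "\<lambda>d. (_ has_field_derivative d) _"])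
    show "(1 - of_real w ^ 2) / a\<^sup>2 * ((c - of_real u) / b)
        + (1 - of_real u ^ 2) / b\<^sup>2 * ((c - of_real w) / a)
      = ((1 - of_real w ^ 2) * (c - of_real u) * b + (1 - of_real u ^ 2) * (c - of_real w) * a)
        / (a\<^sup>2 * b\<^sup>2)"
      using a b by (simp add: field_simps power2_eq_square)
  qed
qed

lemma blaschke2_critical_point_equation:
  fixes u w :: real and c :: complex
  assumes "\<bar>u\<bar> < 1" "\<bar>w\<bar> < 1" "norm c < 1"
    and "deriv (blaschke2 w u) c = 0"
  shows "of_real (u + w) * c\<^sup>2 - 2 * of_real (1 + u * w) * c + of_real (u + w) = 0"
proof -
  have a: "1 - of_real w * c \<noteq> 0" and b: "1 - of_real u * c \<noteq> 0"
    using assms one_minus_mult_nonzero_in_disc[of "of_real w" c]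
      one_minus_mult_nonzero_in_disc[of "of_real u" c] by auto
  have "(1 - of_real w ^ 2) * (c - of_real u) * (1 - of_real u * c)
      + (1 - of_real u ^ 2) * (c - of_real w) * (1 - of_real w * c) = 0"
    using assms(4) a b by (simp add: deriv_blaschke2)
  moreover have "(1 - of_real w ^ 2) * (c - of_real u) * (1 - of_real u * c)
      + (1 - of_real u ^ 2) * (c - of_real w) * (1 - of_real w * c)
    = - of_real (1 - u * w)
      * (of_real (u + w) * c\<^sup>2 - 2 * of_real (1 + u * w) * c + of_real (u + w))"
    by (simp add: algebra_simps power2_eq_square)
  moreover have "\<bar>u * w\<bar> < 1"
    using assms(1,2) by (metis abs_mult abs_mult_less mult_1_right)
  then have "1 - u * w \<noteq> 0" by auto
  ultimately show ?thesis by (metis mult_eq_0_iff neg_equal_0_iff_equal of_real_eq_0_iff)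
qed

lemma symmetric_quadratic_root_in_disc_real:
  fixes s p :: real and c :: complex
  assumes "of_real s * c\<^sup>2 - 2 * of_real p * c + of_real s = 0"
    and "\<bar>s\<bar> < p" "norm c < 1"
  shows "c \<in> \<real>"
proof -
  have "Im (of_real s * c\<^sup>2 - 2 * of_real p * c + of_real s) = 0" using assms(1) by simp
  then have "Im c * (2 * s * Re c - 2 * p) = 0" by (simp add: power2_eq_square algebra_simps)
  moreover have "\<bar>s * Re c\<bar> \<le> \<bar>s\<bar>"
    using abs_Re_le_cmod[of c] assms(3) by (simp add: abs_mult mult_left_le)
  then have "2 * s * Re c - 2 * p \<noteq> 0" using assms(2) by auto
  ultimately show ?thesis by (simp add: complex_is_Real_iff)
qed

lemma abs_add_less_one_plus_mult:
  fixes u w :: real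
  assumes "\<bar>u\<bar> < 1" "\<bar>w\<bar> < 1"
  shows "\<bar>u + w\<bar> < 1 + u * w"
proof -
  have "0 < (1 - u) * (1 - w)" "0 < (1 + u) * (1 + w)" using assms by auto
  then show ?thesis by (simp add: algebra_simps abs_if)
qed

lemma blaschke2_critical_point_real:
  fixes u w :: real and c :: complex
  assumes "\<bar>u\<bar> < 1" "\<bar>w\<bar> < 1" "norm c < 1"
    and "deriv (blaschke2 w u) c = 0"
  shows "c \<in> \<real>"
  using symmetric_quadratic_root_in_disc_real[OF blaschke2_critical_point_equation[OF assms]]
    abs_add_less_one_plus_mult[OF assms(1,2)] assms(3)
  by blast

theorem lemma3p5:
  fixes u w :: real and c :: complex
  assumes "u \<in> {-1<..<1}" and "w \<in> {-1<..<1}"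
    and "norm c < 1"
    and "deriv (blaschke2 w u) c = 0"
  shows "exp (\<i> * (of_real pi + 2 * of_real (Arg (1 - cnj c * of_real w))
                     + 2 * of_real (Arg (1 - cnj c * of_real u))
                     + 2 * of_real (Arg (1 - c * cnj (blaschke2 w u c)))))
         * ((blaschke2 w u c - c) / (1 - cnj c * blaschke2 w u c)) \<in> \<real>"
proof -
  have "c \<in> \<real>" using assms by (intro blaschke2_critical_point_real) auto
  then obtain x where c: "c = of_real x" by (blast elim: Reals_cases)
  define B where "B = blaschke2 w u c"
  have B: "B \<in> \<real>" unfolding B_def blaschke2_def c by simp
  have cnj: "cnj c = c" "cnj B = B" using B by (simp_all add: c Reals_cnj_iff)
  have "exp (\<i> * (of_real pi + 2 * of_real (Arg (1 - cnj c * of_real w))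
                  + 2 * of_real (Arg (1 - cnj c * of_real u))
                  + 2 * of_real (Arg (1 - c * cnj B))))
      = exp (\<i> * of_real pi) * exp (\<i> * (2 * of_real (Arg (1 - cnj c * of_real w))))
        * exp (\<i> * (2 * of_real (Arg (1 - cnj c * of_real u))))
        * exp (\<i> * (2 * of_real (Arg (1 - c * cnj B))))"
    by (simp add: distrib_left exp_add)
  also have "\<dots> = -1"
    using B by (simp add: cnj c exp_pi_i' exp_two_Arg_of_real)
  finally show ?thesis
    using B unfolding B_def[symmetric] by (simp add: cnj c)
qed

end
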